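(* Let $A_1,\dots,A_k$ be $n$-dimensional boxes, and let $\mathcal{O}$ be a set of orders of them (innermost to outermost) each of which is a possible arrangement. (1) For any constant $\lambda>0$, the boxes obtained by multiplying all closed side lengths of all $A_j$ by $\lambda$ can be put in every order of $\mathcal{O}$ (with corresponding labels). (2) For any constant $c>0$, the boxes obtained by adding $c$ to all closed side lengths of all $A_j$ can be put in every order of $\mathcal{O}$.
   Context: An $n$-dimensional box $A$ has closed side lengths $a_1\le\dots\le a_n$ (positive reals). A state of $A$ is either closed or expanded along one side $i$: $a_i$ is replaced by $a_i'$ with $a_i\le a_i'\le 2a_i$, other sides unchanged (only one side can expand). The dimension vector of a state is its side lengths sorted non-decreasingly. A box in some state fits inside another box in some state if each coordinate of the outer one's dimension vector is strictly larger than the corresponding coordinate of the inner one's. An order $X_1,\dots,X_k$ (innermost to outermost) is a possible arrangement if each box can be given a state so that $X_j$ fits inside $X_{j+1}$ for all $j$; states may differ between arrangements. *)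

theory Defs
  imports "HOL-Analysis.Analysis" "HOL-Library.Multiset"
begin

text \<open>A state is either closed (side lengths unchanged) or expanded along
  exactly one side i, where a_i is replaced by some a_i' with a_i \<le> a_i' \<le> 2 a_i.\<close>

definition is_box :: "nat \<Rightarrow> real list \<Rightarrow> bool" where
  "is_box n a \<longleftrightarrow> length a = n \<and> (\<forall>x\<in>set a. x > 0)"

definition state_of :: "real list \<Rightarrow> real list \<Rightarrow> bool" where
  "state_of a s \<longleftrightarrow> s = a \<or>
     (\<exists>i < length a. \<exists>t. a ! i \<le> t \<and> t \<le> 2 * a ! i \<and> s = a[i := t])"

definition dimvec :: "real list \<Rightarrow> real list" where
  "dimvec s = sort s"

definition fits_in :: "real list \<Rightarrow> real list \<Rightarrow> bool" where
  "fits_in s t \<longleftrightarrow> length s = length t \<and>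
     (\<forall>j < length s. dimvec s ! j < dimvec t ! j)"

text \<open>An order X_1,...,X_k (innermost to outermost), given as a list of box labels,
  is a possible arrangement of the boxes A if each box can be given a state so that
  consecutive boxes fit.\<close>
definition possible_arrangement :: "(nat \<Rightarrow> real list) \<Rightarrow> nat list \<Rightarrow> bool" where
  "possible_arrangement A ord \<longleftrightarrow>
     (\<exists>st :: nat \<Rightarrow> real list. (\<forall>j\<in>set ord. state_of (A j) (st j)) \<and>
        (\<forall>m. Suc m < length ord \<longrightarrow> fits_in (st (ord ! m)) (st (ord ! Suc m))))"

definition is_order :: "nat \<Rightarrow> nat list \<Rightarrow> bool" where
  "is_order k ord \<longleftrightarrow> mset ord = mset [0..<k]"

end

theory Submission
  imports Defs
begin

text \<open>Scaling by \<open>\<lambda> > 0\<close> and translation by \<open>c > 0\<close> are strictly increasing maps \<open>f\<close>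
  that keep every expansion interval inside an expansion interval: \<open>x \<le> t \<le> 2x\<close> implies
  \<open>f x \<le> f t \<le> 2 f x\<close>. Applying such an \<open>f\<close> to every side of the states witnessing an
  arrangement therefore gives states of the transformed boxes; since \<open>f\<close> is monotone it
  commutes with sorting, and since it is strictly monotone the strict coordinatewise
  inequalities between dimension vectors survive.\<close>

lemma sort_map_mono:
  fixes f :: "'a::linorder \<Rightarrow> 'b::linorder"
  assumes "mono f"
  shows "sort (map f xs) = map f (sort xs)"
proof (rule properties_for_sort)
  show "mset (map f (sort xs)) = mset (map f xs)" by simp
  show "sorted (map f (sort xs))"
    by (rule sorted_map_mono) (use assms in \<open>auto intro: mono_on_subset\<close>)
qed

lemma state_of_map:
  fixes f :: "real \<Rightarrow> real"
  assumes doubling: "\<And>x t. x \<le> t \<Longrightarrow> t \<le> 2 * x \<Longrightarrow> f x \<le> f t \<and> f t \<le> 2 * f x"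
    and "state_of a s"
  shows "state_of (map f a) (map f s)"
  using \<open>state_of a s\<close> unfolding state_of_def
proof (elim disjE exE conjE)
  fix i t assume "i < length a" "a ! i \<le> t" "t \<le> 2 * a ! i" "s = a[i := t]"
  then show "map f s = map f a \<or>
      (\<exists>i < length (map f a). \<exists>t. map f a ! i \<le> t \<and> t \<le> 2 * map f a ! i \<and>
         map f s = (map f a)[i := t])"
    using doubling[of "a ! i" t] by (intro disjI2 exI[of _ i]) (auto simp: map_update)
qed simp

lemma fits_in_map:
  fixes f :: "real \<Rightarrow> real"
  assumes "strict_mono f" and "fits_in s t"
  shows "fits_in (map f s) (map f t)"
  using assms unfolding fits_in_def dimvec_def
  by (auto simp: sort_map_mono strict_mono_mono strict_monoD)

lemma possible_arrangement_map:
  fixes f :: "real \<Rightarrow> real"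
  assumes "strict_mono f"
    and doubling: "\<And>x t. x \<le> t \<Longrightarrow> t \<le> 2 * x \<Longrightarrow> f x \<le> f t \<and> f t \<le> 2 * f x"
    and "possible_arrangement A ord"
  shows "possible_arrangement (\<lambda>j. map f (A j)) ord"
proof -
  obtain st where states: "\<forall>j\<in>set ord. state_of (A j) (st j)"
    and fits: "\<forall>m. Suc m < length ord \<longrightarrow> fits_in (st (ord ! m)) (st (ord ! Suc m))"
    using \<open>possible_arrangement A ord\<close> unfolding possible_arrangement_def by blast
  show ?thesis
    unfolding possible_arrangement_def
  proof (intro exI conjI)
    show "\<forall>j\<in>set ord. state_of (map f (A j)) (map f (st j))"
      using states state_of_map[of f, OF doubling] by blast
    show "\<forall>m. Suc m < length ord \<longrightarrow>
        fits_in (map f (st (ord ! m))) (map f (st (ord ! Suc m)))"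
      using fits fits_in_map[OF \<open>strict_mono f\<close>] by blast
  qed
qed

theorem proposition24:
  fixes n k :: nat and A :: "nat \<Rightarrow> real list" and Ords :: "nat list set"
  assumes boxes: "\<forall>j < k. is_box n (A j)"
    and orders: "\<forall>ord \<in> Ords. is_order k ord \<and> possible_arrangement A ord"
  shows "(\<forall>l::real. l > 0 \<longrightarrow>
            (\<forall>ord \<in> Ords. possible_arrangement (\<lambda>j. map (\<lambda>x. l * x) (A j)) ord))
       \<and> (\<forall>c::real. c > 0 \<longrightarrow>
            (\<forall>ord \<in> Ords. possible_arrangement (\<lambda>j. map (\<lambda>x. x + c) (A j)) ord))"
proof (intro conjI allI impI ballI)
  fix l :: real and ord assume "l > 0" and "ord \<in> Ords"
  show "possible_arrangement (\<lambda>j. map (\<lambda>x. l * x) (A j)) ord"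
  proof (rule possible_arrangement_map)
    show "strict_mono (\<lambda>x. l * x)" using \<open>l > 0\<close> by (simp add: strict_mono_def)
    show "possible_arrangement A ord" using orders \<open>ord \<in> Ords\<close> by blast
  qed (use \<open>l > 0\<close> in \<open>simp add: mult_left_mono\<close>)
next
  fix c :: real and ord assume "c > 0" and "ord \<in> Ords"
  show "possible_arrangement (\<lambda>j. map (\<lambda>x. x + c) (A j)) ord"
  proof (rule possible_arrangement_map)
    show "strict_mono (\<lambda>x. x + c)" by (simp add: strict_mono_def)
    show "possible_arrangement A ord" using orders \<open>ord \<in> Ords\<close> by blast
  qed (use \<open>c > 0\<close> in simp)
qed

end
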